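(* Let $n$ be an odd positive integer and let $A=S(n)$. If $\Omega(n)=1$ (i.e. $n$ is an odd prime), then $D_A(n)=3$. If $n$ is squarefree, every prime divisor of $n$ is at least $7$ and $\Omega(n)\geq 2$, then $D_A(n)=\Omega(n)+1$.
   Context: For $n\ge 2$, $\mathbb{Z}_n$ is the ring of integers mod $n$ and $U(n)$ its group of units. For a nonempty $A\subseteq \mathbb{Z}_n\setminus\{0\}$, a sequence $(x_1,\ldots,x_k)$ in $\mathbb{Z}_n$ is an $A$-weighted zero-sum sequence if there exist $a_1,\ldots,a_k\in A$ with $a_1x_1+\cdots+a_kx_k=0$. The $A$-weighted Davenport constant $D_A(n)$ is the least positive integer $k$ such that every sequence of length $k$ in $\mathbb{Z}_n$ has a (nonempty) subsequence which is an $A$-weighted zero-sum sequence. If $n=p_1^{r_1}\cdots p_k^{r_k}$ with distinct primes $p_i$, $\Omega(n)=r_1+\cdots+r_k$. For an odd prime $p$ dividing $n$ and $a\in U(n)$, $\left(\frac{a}{p}\right)$ denotes the Legendre symbol of the image of $a$ in $\mathbb{Z}_p$; for odd $n=p_1^{r_1}\cdots p_k^{r_k}$ the Jacobi symbol is $\left(\frac{a}{n}\right)=\prod_i\left(\frac{a}{p_i}\right)^{r_i}$, and $S(n)$ is the kernel of the homomorphism $U(n)\to\{1,-1\}$, $a\mapsto\left(\frac{a}{n}\right)$. *)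

theory Defs
  imports "HOL-Number_Theory.Number_Theory" "HOL-Computational_Algebra.Squarefree"
begin

text \<open>Elements of Z_n are represented by their residues 0..n-1 (type nat).\<close>

definition Omega :: "nat \<Rightarrow> nat" where
  "Omega n = (\<Sum>p\<in>prime_factors n. multiplicity p n)"

definition Jacobi :: "nat \<Rightarrow> nat \<Rightarrow> int" where
  "Jacobi a n = (\<Prod>p\<in>prime_factors n. Legendre (int a) (int p) ^ multiplicity p n)"

definition S_set :: "nat \<Rightarrow> nat set" where
  "S_set n = {a. a < n \<and> coprime a n \<and> Jacobi a n = 1}"

definition weighted_zero_sum :: "nat set \<Rightarrow> nat \<Rightarrow> nat list \<Rightarrow> nat set \<Rightarrow> bool" where
  "weighted_zero_sum A n xs I \<longleftrightarrow>
     (\<exists>a. (\<forall>i\<in>I. a i \<in> A) \<and> (\<Sum>i\<in>I. a i * xs ! i) mod n = 0)"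

definition has_weighted_zero_subseq :: "nat set \<Rightarrow> nat \<Rightarrow> nat list \<Rightarrow> bool" where
  "has_weighted_zero_subseq A n xs \<longleftrightarrow>
     (\<exists>I. I \<subseteq> {..<length xs} \<and> I \<noteq> {} \<and> weighted_zero_sum A n xs I)"

definition weighted_davenport :: "nat set \<Rightarrow> nat \<Rightarrow> nat" where
  "weighted_davenport A n = (LEAST k. k > 0 \<and>
     (\<forall>xs. length xs = k \<and> set xs \<subseteq> {..<n} \<longrightarrow> has_weighted_zero_subseq A n xs))"

end

theory Submission
  imports Defs
begin

lemma Legendre_cong:
  assumes "[a = b] (mod p)"
  shows "Legendre a p = Legendre b p"
  using assms unfolding Legendre_def QuadRes_def
  by (smt (verit) cong_sym cong_trans)

lemma Legendre_eq_0_iff: "Legendre a p = 0 \<longleftrightarrow> p dvd a"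
  unfolding Legendre_def by (auto simp: cong_0_iff)

lemma Legendre_cases: "Legendre a p \<in> {-1, 0, 1}"
  unfolding Legendre_def by auto

lemma Legendre_eq_1_or_minus_1: "\<not> p dvd a \<Longrightarrow> Legendre a p = 1 \<or> Legendre a p = -1"
  using Legendre_cases[of a p] Legendre_eq_0_iff[of a p] by auto

lemma Legendre_mult_self: "\<not> p dvd a \<Longrightarrow> Legendre a p * Legendre a p = 1"
  using Legendre_eq_1_or_minus_1[of p a] by auto

lemma Legendre_one: "p > 1 \<Longrightarrow> Legendre 1 p = 1"
  unfolding Legendre_def QuadRes_def cong_0_iff
  by (auto intro: exI[of _ 1] simp: zdvd1_eq)

lemma Legendre_square:
  fixes p :: nat
  assumes "prime p" "\<not> int p dvd a"
  shows "Legendre (a^2) p = 1"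
proof -
  have "\<not> int p dvd a^2" using assms prime_dvd_power[of "int p"] by auto
  moreover have "QuadRes p (a^2)" unfolding QuadRes_def by (blast intro: cong_refl)
  ultimately show ?thesis unfolding Legendre_def cong_0_iff by simp
qed

text \<open>Euler's criterion determines the product up to a multiple of \<open>p > 2\<close>, and both sides lie in
  \<open>{-1, 0, 1}\<close>.\<close>
lemma Legendre_mult:
  fixes p :: nat
  assumes "prime p" "2 < p"
  shows "Legendre (a * b) p = Legendre a p * Legendre b p"
proof -
  have "[Legendre (a * b) p = (a * b) ^ ((p - 1) div 2)] (mod p)"
    using euler_criterion assms by blast
  moreover have "[Legendre a p * Legendre b p = a ^ ((p - 1) div 2) * b ^ ((p - 1) div 2)] (mod p)"
    using euler_criterion assms cong_mult by blast
  ultimately have "[Legendre (a * b) p = Legendre a p * Legendre b p] (mod p)"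
    by (metis cong_sym cong_trans power_mult_distrib)
  then have "int p dvd Legendre (a * b) p - Legendre a p * Legendre b p"
    by (simp add: cong_iff_dvd_diff)
  moreover have "\<bar>Legendre (a * b) p - Legendre a p * Legendre b p\<bar> \<le> 2"
    using Legendre_cases[of "a * b" p] Legendre_cases[of a p] Legendre_cases[of b p] by auto
  ultimately show ?thesis
    using dvd_imp_le_int[of "Legendre (a * b) p - Legendre a p * Legendre b p" "int p"] assms(2)
    by fastforce
qed

lemma Legendre_minus:
  fixes p :: nat
  assumes "prime p" "2 < p"
  shows "Legendre (- a) p = Legendre (-1) p * Legendre a p"
  using Legendre_mult[OF assms, of "-1" a] by simp

lemma ex_nonresidue:
  fixes p :: nat
  assumes "prime p" "2 < p"
  shows "\<exists>g::nat. 0 < g \<and> g < p \<and> Legendre (int g) p = -1"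
proof (rule ccontr)
  assume no_nonresidue: "\<not> ?thesis"
  define h where "h = (p - 1) div 2"
  have "odd p" using assms prime_odd_nat by auto
  then have p_eq: "int p = 2 * int h + 1" unfolding h_def by presburger
  have "{1..<int p} \<subseteq> (\<lambda>x. x^2 mod p) ` {1..int h}"
  proof
    fix m assume m: "m \<in> {1..<int p}"
    then have "Legendre m p \<noteq> -1" "\<not> int p dvd m"
      using no_nonresidue[simplified] zdvd_not_zless[of m "int p"]
      by (auto dest: spec[of _ "nat m"])
    then obtain y where "[y^2 = m] (mod p)"
      unfolding Legendre_def QuadRes_def cong_0_iff by (auto split: if_splits)
    define z where "z = y mod p"
    then have "z^2 mod p = m" using m \<open>[y^2 = m] (mod p)\<close> by (simp add: cong_def power_mod)
    moreover have "0 \<le> z" "z < p" using assms unfolding z_def by auto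
    moreover have "z \<noteq> 0" using m \<open>z^2 mod p = m\<close> by auto
    ultimately have "z^2 mod p = m" "0 < z" "z < p" by auto
    moreover have "(p - z)^2 = z^2 + p * (p - 2 * z)" by (simp add: power2_eq_square algebra_simps)
    then have "(p - z)^2 mod p = z^2 mod p" by simp
    ultimately show "m \<in> (\<lambda>x. x^2 mod int p) ` {1..int h}"
      using p_eq by (cases "z \<le> int h") (force intro: rev_image_eqI[of "p - z"])+
  qed
  then have "card {1..<int p} \<le> card {1..int h}"
    by (meson card_image_le card_mono finite_atLeastAtMost_int finite_imageI le_trans)
  then show False using p_eq assms(2) by (simp add: nat_mult_distrib)
qed

lemma ex_quotient_with_Legendre:
  fixes p :: nat
  assumes "prime p" "2 < p" "\<not> int p dvd y"
  shows "\<exists>b. [b * y = t] (mod p) \<and> Legendre b p = Legendre t p * Legendre y p"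
proof -
  have "coprime y (int p)"
    using prime_imp_coprime[of "int p" y] assms by (simp add: coprime_commute)
  then obtain i where i: "[y * i = 1] (mod p)" using cong_solve_coprime_int by blast
  have "Legendre (y * i) p = 1" using Legendre_cong[OF i] Legendre_one[of "int p"] assms(2) by simp
  then have "Legendre y p * Legendre i p = 1" by (simp only: Legendre_mult[OF assms(1,2)])
  then have "Legendre i p = Legendre y p" using Legendre_eq_1_or_minus_1[OF assms(3)] by auto
  then have "Legendre (t * i) p = Legendre t p * Legendre y p"
    by (simp only: Legendre_mult[OF assms(1,2)])
  moreover have "[(t * i) * y = t] (mod p)"
    using cong_scalar_left[OF i, of t] by (simp add: ac_simps)
  ultimately show ?thesis by blast
qed

subsection \<open>Legendre symbols of consecutive integers\<close>

lemma ex_consecutive_residue_nonresidue: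
  fixes p :: nat
  assumes "prime p" "2 < p"
  shows "\<exists>r. Legendre r p = 1 \<and> Legendre (r + 1) p = -1"
proof -
  obtain g :: nat where g: "0 < g" "g < p" "Legendre (int g) p = -1"
    using ex_nonresidue[OF assms] by blast
  let ?N = "\<lambda>k::nat. Legendre (int k + 1) p = -1"
  have "?N (g - 1)" using g by (simp add: of_nat_diff)
  moreover have "\<not> ?N 0" using Legendre_one[of "int p"] assms by simp
  ultimately obtain k where k: "k < g - 1" "\<not> ?N k" "?N (Suc k)"
    using ex_least_nat_less[of ?N "g - 1"] by blast
  have "\<not> int p dvd int k + 1"
    using k g zdvd_not_zless[of "int k + 1" "int p"] by simp
  then have "Legendre (int k + 1) p = 1" using k(2) Legendre_eq_1_or_minus_1 by blast
  moreover have "Legendre (int k + 1 + 1) p = -1" using k(3) by (simp add: add_ac)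
  ultimately show ?thesis by blast
qed

lemma ex_consecutive_residues:
  fixes p :: nat
  assumes "prime p" "7 \<le> p"
  shows "\<exists>r. Legendre r p = 1 \<and> Legendre (r + 1) p = 1"
proof -
  have unit: "\<not> int p dvd int k" if "0 < k" "k < 7" for k
    using that assms zdvd_not_zless[of "int k" "int p"] by auto
  have L1: "Legendre 1 p = 1" using Legendre_one[of "int p"] assms by simp
  have L4: "Legendre 4 p = 1" using Legendre_square[OF assms(1) unit[of 2]] by simp
  have L9: "Legendre 9 p = 1" using Legendre_square[OF assms(1) unit[of 3]] by simp
  consider "Legendre 2 p = 1" | "Legendre 5 p = 1" | "Legendre 2 p = -1" "Legendre 5 p = -1"
    using Legendre_eq_1_or_minus_1[OF unit[of 2]] Legendre_eq_1_or_minus_1[OF unit[of 5]] by fastforce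
  then show ?thesis
  proof cases
    case 1 then show ?thesis using L1 by (intro exI[of _ 1]) simp
  next
    case 2 then show ?thesis using L4 by (intro exI[of _ 4]) simp
  next
    case 3
    then have "Legendre 10 p = 1" using Legendre_mult[OF assms(1), of 2 5] assms by simp
    then show ?thesis using L9 by (intro exI[of _ 9]) simp
  qed
qed

text \<open>The substitutions \<open>r \<mapsto> -r - 1\<close> and \<open>r \<mapsto> 1/r\<close> act on the sign patterns of
  \<open>(r, r + 1)\<close>; from the two patterns found above they produce the other two.\<close>

lemma consecutive_Legendre_reflect:
  fixes p :: nat
  assumes "prime p" "2 < p" "Legendre r p = \<sigma>" "Legendre (r + 1) p = \<tau>"
  shows "\<exists>s. Legendre s p = Legendre (-1) p * \<tau> \<and> Legendre (s + 1) p = Legendre (-1) p * \<sigma>"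
proof (intro exI conjI)
  show "Legendre (-1 * (r + 1)) p = Legendre (-1) p * \<tau>"
    using Legendre_mult[OF assms(1,2), of "-1" "r + 1"] assms(4) by simp
  show "Legendre (-1 * (r + 1) + 1) p = Legendre (-1) p * \<sigma>"
    using assms Legendre_mult[OF assms(1,2), of "-1" r] by simp
qed

lemma consecutive_Legendre_invert:
  fixes p :: nat
  assumes "prime p" "2 < p" "Legendre r p = \<sigma>" "Legendre (r + 1) p = \<tau>" "\<sigma> \<noteq> 0"
  shows "\<exists>s. Legendre s p = \<sigma> \<and> Legendre (s + 1) p = \<sigma> * \<tau>"
proof -
  have r: "\<not> int p dvd r" using assms(3,5) Legendre_eq_0_iff by blast
  obtain s where s: "[s * r = 1] (mod p)" "Legendre s p = Legendre 1 p * \<sigma>"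
    using ex_quotient_with_Legendre[OF assms(1,2) r] assms(3) by blast
  have "[(s + 1) * r = r + 1] (mod p)"
    using cong_add[OF s(1) cong_refl[of r]] by (simp add: algebra_simps)
  then have "Legendre (s + 1) p * \<sigma> = \<tau>"
    using Legendre_cong[of "(s + 1) * r" "r + 1"] Legendre_mult[OF assms(1,2), of "s + 1" r] assms(3,4)
    by simp
  moreover have "\<sigma> = 1 \<or> \<sigma> = -1" using assms(3,5) Legendre_cases[of r p] by auto
  ultimately have "Legendre (s + 1) p = \<sigma> * \<tau>" by auto
  then show ?thesis using s(2) Legendre_one[of "int p"] assms(2) by auto
qed

lemma ex_consecutive_Legendre:
  fixes p :: nat
  assumes "prime p" "7 \<le> p" "\<sigma> \<in> {-1, 1}" "\<tau> \<in> {-1, 1}"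
  shows "\<exists>r. Legendre r p = \<sigma> \<and> Legendre (r + 1) p = \<tau>"
proof -
  have p: "prime p" "2 < p" using assms by auto
  have nonresidue_first: "(\<exists>r. Legendre r p = -1 \<and> Legendre (r + 1) p = 1)
      \<and> (\<exists>r. Legendre r p = -1 \<and> Legendre (r + 1) p = -1)"
  proof (cases "Legendre (-1) p = 1")
    case True
    obtain r where "Legendre r p = 1" "Legendre (r + 1) p = -1"
      using ex_consecutive_residue_nonresidue[OF p] by blast
    from consecutive_Legendre_reflect[OF p this] True
    obtain s where s: "Legendre s p = -1" "Legendre (s + 1) p = 1" by auto
    moreover obtain s' where "Legendre s' p = -1" "Legendre (s' + 1) p = -1"
      using consecutive_Legendre_invert[OF p s] by auto
    ultimately show ?thesis by blast
  next
    case False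
    then have "Legendre (-1) p = -1" using Legendre_eq_1_or_minus_1[of "int p" "-1"] p by auto
    obtain r where "Legendre r p = 1" "Legendre (r + 1) p = 1"
      using ex_consecutive_residues[OF assms(1,2)] by blast
    from consecutive_Legendre_reflect[OF p this] \<open>Legendre (-1) p = -1\<close>
    obtain s where s: "Legendre s p = -1" "Legendre (s + 1) p = -1" by auto
    moreover obtain s' where "Legendre s' p = -1" "Legendre (s' + 1) p = 1"
      using consecutive_Legendre_invert[OF p s] by auto
    ultimately show ?thesis by blast
  qed
  from assms(3,4) consider "\<sigma> = 1" "\<tau> = 1" | "\<sigma> = 1" "\<tau> = -1"
    | "\<sigma> = -1" "\<tau> = 1" | "\<sigma> = -1" "\<tau> = -1" by blast
  then show ?thesis
  proof cases
  qed (use nonresidue_first ex_consecutive_residues[OF assms(1,2)]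
      ex_consecutive_residue_nonresidue[OF p] in simp_all)
qed

lemma ex_Legendre_eq:
  fixes p :: nat
  assumes "prime p" "2 < p" "e \<in> {-1, 1}"
  shows "\<exists>b. Legendre b p = e"
  using assms ex_nonresidue[OF assms(1,2)] Legendre_one[of "int p"] by auto

subsection \<open>Prescribed Legendre symbols in short linear combinations\<close>

lemma ex_Legendre_sum_eq:
  fixes p :: nat
  assumes "prime p" "7 \<le> p" "\<not> int p dvd c" "e1 \<in> {-1, 1}" "e2 \<in> {-1, 1}"
  shows "\<exists>t1 t2. Legendre t1 p = e1 \<and> Legendre t2 p = e2 \<and> [t1 + t2 = c] (mod p)"
proof -
  have p: "prime p" "2 < p" using assms by auto
  have c: "Legendre c p = 1 \<or> Legendre c p = -1" using Legendre_eq_1_or_minus_1[OF assms(3)] .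
  have e: "e1 * e2 \<in> {-1, 1}" "e1 * Legendre c p \<in> {-1, 1}" using assms(4,5) c by auto
  obtain r where r: "Legendre r p = e1 * e2" "Legendre (r + 1) p = e1 * Legendre c p"
    using ex_consecutive_Legendre[OF assms(1,2) e] by blast
  have "Legendre (r + 1) p \<noteq> 0" using r(2) e(2) by auto
  then have "\<not> int p dvd r + 1" by (simp add: Legendre_eq_0_iff)
  then obtain b where b: "[b * (r + 1) = c] (mod p)" "Legendre b p = Legendre c p * Legendre (r + 1) p"
    using ex_quotient_with_Legendre[OF p] by blast
  have "Legendre b p = e1" using b(2) r(2) c by auto
  moreover have "Legendre (b * r) p = e2"
    unfolding Legendre_mult[OF p] using \<open>Legendre b p = e1\<close> r(1) assms(4) by auto
  moreover have "[b + b * r = c] (mod p)" using b(1) by (simp add: algebra_simps)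
  ultimately show ?thesis by blast
qed

lemma ex_Legendre_weights_2:
  fixes p :: nat
  assumes "prime p" "7 \<le> p" "\<not> int p dvd y1" "\<not> int p dvd y2" "\<not> int p dvd c"
    and "e1 \<in> {-1, 1}" "e2 \<in> {-1, 1}"
  shows "\<exists>b1 b2. Legendre b1 p = e1 \<and> Legendre b2 p = e2 \<and> [b1 * y1 + b2 * y2 = c] (mod p)"
proof -
  have p: "prime p" "2 < p" using assms by auto
  have "e1 * Legendre y1 p \<in> {-1, 1}" "e2 * Legendre y2 p \<in> {-1, 1}"
    using assms(6,7) Legendre_eq_1_or_minus_1[OF assms(3)] Legendre_eq_1_or_minus_1[OF assms(4)] by auto
  then obtain t1 t2 where t: "Legendre t1 p = e1 * Legendre y1 p" "Legendre t2 p = e2 * Legendre y2 p"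
    "[t1 + t2 = c] (mod p)"
    using ex_Legendre_sum_eq[OF assms(1,2,5)] by blast
  obtain b1 where b1: "[b1 * y1 = t1] (mod p)" "Legendre b1 p = Legendre t1 p * Legendre y1 p"
    using ex_quotient_with_Legendre[OF p assms(3)] by blast
  obtain b2 where b2: "[b2 * y2 = t2] (mod p)" "Legendre b2 p = Legendre t2 p * Legendre y2 p"
    using ex_quotient_with_Legendre[OF p assms(4)] by blast
  have "Legendre b1 p = e1" "Legendre b2 p = e2"
    using b1(2) b2(2) t(1,2) Legendre_mult_self[OF assms(3)] Legendre_mult_self[OF assms(4)]
    by (simp_all add: mult.assoc)
  moreover have "[b1 * y1 + b2 * y2 = c] (mod p)"
    using cong_add[OF b1(1) b2(1)] t(3) by (rule cong_trans)
  ultimately show ?thesis by blast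
qed

lemma ex_Legendre_weights_3:
  fixes p :: nat
  assumes "prime p" "7 \<le> p" "\<not> int p dvd y1" "\<not> int p dvd y2" "\<not> int p dvd y3"
    and "e1 \<in> {-1, 1}" "e2 \<in> {-1, 1}" "e3 \<in> {-1, 1}"
  shows "\<exists>b1 b2 b3. Legendre b1 p = e1 \<and> Legendre b2 p = e2 \<and> Legendre b3 p = e3
    \<and> [b1 * y1 + b2 * y2 + b3 * y3 = c] (mod p)"
proof -
  have p: "prime p" "2 < p" using assms by auto
  obtain g where g: "Legendre g p = e3" using ex_Legendre_eq[OF p assms(8)] by blast
  text \<open>Of \<open>c - g y3\<close> and \<open>c - 4 g y3\<close>, which differ by the unit \<open>3 g y3\<close>, one is a unit.\<close>
  obtain b3 where b3: "Legendre b3 p = e3" "\<not> int p dvd c - b3 * y3"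
  proof (cases "int p dvd c - g * y3")
    case True
    have "Legendre g p \<noteq> 0" using g assms(8) by auto
    then have "\<not> int p dvd g" by (simp add: Legendre_eq_0_iff)
    moreover have "\<not> int p dvd 3" using zdvd_not_zless[of 3 "int p"] assms(2) by simp
    moreover have "prime (int p)" using p by simp
    ultimately have "\<not> int p dvd 3 * (g * y3)" using assms(5) by (simp add: prime_dvd_mult_iff)
    moreover have "3 * (g * y3) = (c - g * y3) - (c - (4 * g) * y3)" by (simp add: algebra_simps)
    ultimately have "\<not> int p dvd c - (4 * g) * y3" using dvd_diff[OF True] by metis
    moreover have "Legendre 4 p = 1"
      using Legendre_square[OF p(1), of 2] zdvd_not_zless[of 2 "int p"] p by simp
    then have "Legendre (4 * g) p = e3" using g by (simp add: Legendre_mult[OF p])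
    ultimately show ?thesis using that by blast
  next
    case False
    then show ?thesis using g that by blast
  qed
  obtain b1 b2 where b: "Legendre b1 p = e1" "Legendre b2 p = e2"
    "[b1 * y1 + b2 * y2 = c - b3 * y3] (mod p)"
    using ex_Legendre_weights_2[OF assms(1-4) b3(2) assms(6,7)] by blast
  have "[b1 * y1 + b2 * y2 + b3 * y3 = c - b3 * y3 + b3 * y3] (mod p)"
    using cong_add[OF b(3) cong_refl] .
  then have "[b1 * y1 + b2 * y2 + b3 * y3 = c] (mod p)" by (simp only: diff_add_cancel)
  with b(1,2) b3(1) show ?thesis by (intro exI[of _ b1] exI[of _ b2] exI[of _ b3] conjI)
qed

lemma ex_Legendre_weights_zero_sum:
  fixes p :: nat and y \<sigma> :: "'i \<Rightarrow> int"
  assumes p: "prime p" "7 \<le> p" and "finite I" and \<sigma>: "\<forall>j\<in>I. \<sigma> j \<in> {-1, 1}"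
    and not_one: "card {j\<in>I. \<not> int p dvd y j} \<noteq> 1"
    and pair: "card {j\<in>I. \<not> int p dvd y j} = 2 \<Longrightarrow>
      (\<Prod>j\<in>{j\<in>I. \<not> int p dvd y j}. \<sigma> j) = Legendre (- (\<Prod>j\<in>{j\<in>I. \<not> int p dvd y j}. y j)) p"
  shows "\<exists>b. (\<forall>j\<in>I. Legendre (b j) p = \<sigma> j) \<and> int p dvd (\<Sum>j\<in>I. b j * y j)"
proof -
  have p2: "2 < p" using p by auto
  define U where "U = {j\<in>I. \<not> int p dvd y j}"
  have "finite U" "U \<subseteq> I" using \<open>finite I\<close> unfolding U_def by auto
  obtain R where R: "\<And>e. e \<in> {-1, 1} \<Longrightarrow> Legendre (R e) p = e"
    using ex_Legendre_eq[OF p(1) p2] by metis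
  text \<open>Off \<open>U\<close> every term vanishes mod \<open>p\<close>, so it suffices to find the weights on \<open>U\<close>.\<close>
  have "\<exists>b. (\<forall>j\<in>U. Legendre (b j) p = \<sigma> j) \<and> int p dvd (\<Sum>j\<in>U. b j * y j)"
  proof -
    have "card U \<noteq> 1" using not_one unfolding U_def .
    then consider "card U = 0" | "card U = 2" | "3 \<le> card U" by linarith
    then show ?thesis
    proof cases
      case 1
      then show ?thesis using \<open>finite U\<close> by simp
    next
      case 2
      then obtain u v where U: "U = {u, v}" "u \<noteq> v" by (meson card_2_iff)
      then have uv: "u \<in> I" "v \<in> I" "\<not> int p dvd y u" "\<not> int p dvd y v" unfolding U_def by auto
      have "\<sigma> u * \<sigma> v = Legendre (- (y u * y v)) p" using pair 2 U unfolding U_def by simp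
      obtain bv where bv: "[bv * y v = - (R (\<sigma> u) * y u)] (mod p)"
        "Legendre bv p = Legendre (- (R (\<sigma> u) * y u)) p * Legendre (y v) p"
        using ex_quotient_with_Legendre[OF p(1) p2 uv(4)] by blast
      have "Legendre (R (\<sigma> u)) p = \<sigma> u" using R \<sigma> uv(1) by auto
      then have "Legendre bv p = Legendre (-1) p * \<sigma> u * Legendre (y u) p * Legendre (y v) p"
        using bv(2) Legendre_minus[OF p(1) p2, of "R (\<sigma> u) * y u"]
          Legendre_mult[OF p(1) p2, of "R (\<sigma> u)" "y u"] by simp
      also have "\<dots> = \<sigma> u * (\<sigma> u * \<sigma> v)"
        using \<open>\<sigma> u * \<sigma> v = _\<close> Legendre_minus[OF p(1) p2, of "y u * y v"]
          Legendre_mult[OF p(1) p2, of "y u" "y v"] by simp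
      finally have "Legendre bv p = \<sigma> u * (\<sigma> u * \<sigma> v)" .
      then have "Legendre bv p = \<sigma> v" using \<sigma> uv(1) by auto
      moreover have "int p dvd R (\<sigma> u) * y u + bv * y v"
        using bv(1) by (simp add: cong_iff_dvd_diff add.commute)
      ultimately show ?thesis
        using U R \<sigma> uv(1) by (intro exI[of _ "(\<lambda>j. R (\<sigma> j))(v := bv)"]) auto
    next
      case 3
      then obtain T where "T \<subseteq> U" "card T = 3" by (meson obtain_subset_with_card_n)
      then obtain u v w where T: "T = {u, v, w}" "u \<noteq> v" "u \<noteq> w" "v \<noteq> w"
        by (meson card_3_iff)
      then have uvw: "u \<in> U" "v \<in> U" "w \<in> U" using \<open>T \<subseteq> U\<close> by auto
      then have "\<not> int p dvd y u" "\<not> int p dvd y v" "\<not> int p dvd y w"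
        "\<sigma> u \<in> {-1, 1}" "\<sigma> v \<in> {-1, 1}" "\<sigma> w \<in> {-1, 1}"
        using \<sigma> unfolding U_def by auto
      from ex_Legendre_weights_3[OF p this, of "- (\<Sum>j\<in>U - T. R (\<sigma> j) * y j)"]
      obtain bu bv bw where b: "Legendre bu p = \<sigma> u" "Legendre bv p = \<sigma> v" "Legendre bw p = \<sigma> w"
        "[bu * y u + bv * y v + bw * y w = - (\<Sum>j\<in>U - T. R (\<sigma> j) * y j)] (mod p)"
        by blast
      define b where "b = (\<lambda>j. R (\<sigma> j))(u := bu, v := bv, w := bw)"
      have "(\<Sum>j\<in>U. b j * y j) = (\<Sum>j\<in>T. b j * y j) + (\<Sum>j\<in>U - T. b j * y j)"
        using sum.subset_diff[OF \<open>T \<subseteq> U\<close> \<open>finite U\<close>] by (simp add: add.commute)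
      also have "(\<Sum>j\<in>T. b j * y j) = bu * y u + bv * y v + bw * y w"
        unfolding b_def T(1) using T(2-4) by simp
      also have "(\<Sum>j\<in>U - T. b j * y j) = (\<Sum>j\<in>U - T. R (\<sigma> j) * y j)"
        unfolding b_def T(1) by (intro sum.cong) auto
      finally have "int p dvd (\<Sum>j\<in>U. b j * y j)"
        using b(4) by (simp add: cong_iff_dvd_diff)
      moreover have "\<forall>j\<in>U. Legendre (b j) p = \<sigma> j"
        using b(1-3) R \<sigma> \<open>U \<subseteq> I\<close> unfolding b_def by auto
      ultimately show ?thesis by blast
    qed
  qed
  then obtain b where b: "\<forall>j\<in>U. Legendre (b j) p = \<sigma> j" "int p dvd (\<Sum>j\<in>U. b j * y j)"
    by blast
  define b' where "b' j = (if j \<in> U then b j else R (\<sigma> j))" for j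
  have "(\<Sum>j\<in>I. b' j * y j) = (\<Sum>j\<in>U. b' j * y j) + (\<Sum>j\<in>I - U. b' j * y j)"
    using sum.subset_diff[OF \<open>U \<subseteq> I\<close> \<open>finite I\<close>] by (simp add: add.commute)
  moreover have "(\<Sum>j\<in>U. b' j * y j) = (\<Sum>j\<in>U. b j * y j)" unfolding b'_def by simp
  moreover have "int p dvd (\<Sum>j\<in>I - U. b' j * y j)" unfolding U_def by (auto intro!: dvd_sum)
  ultimately have "int p dvd (\<Sum>j\<in>I. b' j * y j)" using b(2) by (simp add: dvd_add)
  moreover have "\<forall>j\<in>I. Legendre (b' j) p = \<sigma> j" using b(1) R \<sigma> unfolding b'_def by auto
  ultimately show ?thesis by blast
qed

lemma prod_sign:
  fixes f :: "'a \<Rightarrow> 'b::idom"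
  assumes "\<forall>x\<in>A. f x \<in> {-1, 1}"
  shows "prod f A \<in> {-1, 1}"
proof -
  have "prod f A * prod f A = (\<Prod>x\<in>A. f x * f x)" by (simp add: prod.distrib)
  also have "\<dots> = 1" using assms by (intro prod.neutral) auto
  finally show ?thesis using square_eq_1_iff by blast
qed

text \<open>A point \<open>j\<close> outside some constraint set \<open>S p\<close> can absorb any sign there, and at most one
  point lies on all constraint sets.\<close>
lemma ex_sign_pattern:
  fixes P :: "'p set" and S :: "'p \<Rightarrow> 'j set" and c :: "'p \<Rightarrow> int"
  assumes "finite P" and c: "\<forall>p\<in>P. c p \<in> {-1, 1}"
    and no_common_pair: "\<nexists>j j'. j \<noteq> j' \<and> (\<forall>p\<in>P. S p = {j, j'})"
  shows "\<exists>\<sigma>. (\<forall>p\<in>P. \<forall>j. \<sigma> p j \<in> {-1, 1})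
    \<and> (\<forall>p\<in>P. card (S p) = 2 \<longrightarrow> (\<Prod>j\<in>S p. \<sigma> p j) = c p)
    \<and> (\<forall>j. (\<Prod>p\<in>P. \<sigma> p j) = 1)"
proof -
  define J where "J = {j. \<forall>p\<in>P. card (S p) = 2 \<and> j \<in> S p}"
  have J_unique: "j = j'" if "j \<in> J" "j' \<in> J" for j j'
  proof (rule ccontr)
    assume "j \<noteq> j'"
    have "S p = {j, j'}" if "p \<in> P" for p
    proof -
      have "card (S p) = 2" "j \<in> S p" "j' \<in> S p"
        using \<open>p \<in> P\<close> \<open>j \<in> J\<close> \<open>j' \<in> J\<close> unfolding J_def by auto
      then obtain x x' where "S p = {x, x'}" by (meson card_2_iff)
      then show ?thesis using \<open>j \<in> S p\<close> \<open>j' \<in> S p\<close> \<open>j \<noteq> j'\<close> by auto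
    qed
    then show False using no_common_pair \<open>j \<noteq> j'\<close> by blast
  qed
  define other where "other p = (SOME j. j \<in> S p - J)" for p
  have other: "other p \<in> S p - J" if pair: "card (S p) = 2" for p
  proof -
    obtain x x' where "S p = {x, x'}" "x \<noteq> x'" using pair unfolding card_2_iff by blast
    moreover have "x \<notin> J \<or> x' \<notin> J" using J_unique[of x x'] \<open>x \<noteq> x'\<close> by auto
    ultimately have "\<exists>j. j \<in> S p - J" by auto
    then show ?thesis unfolding other_def by (rule someI_ex)
  qed
  define base where "base p j = (if card (S p) = 2 \<and> j = other p then c p else 1)" for p j
  define fix_at where "fix_at j = (SOME p. p \<in> P \<and> \<not> (card (S p) = 2 \<and> j \<in> S p))" for j
  have fix_at: "fix_at j \<in> P \<and> \<not> (card (S (fix_at j)) = 2 \<and> j \<in> S (fix_at j))" if "j \<notin> J" for j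
  proof -
    have "\<exists>p. p \<in> P \<and> \<not> (card (S p) = 2 \<and> j \<in> S p)" using that unfolding J_def by blast
    then show ?thesis unfolding fix_at_def by (rule someI_ex)
  qed
  define \<sigma> where "\<sigma> p j = base p j * (if j \<notin> J \<and> p = fix_at j then \<Prod>p'\<in>P. base p' j else 1)"
    for p j
  have base: "base p j \<in> {-1, 1}" if "p \<in> P" for p j
    using c that unfolding base_def by auto
  have "\<sigma> p j \<in> {-1, 1}" if "p \<in> P" for p j
  proof -
    have "(\<Prod>p'\<in>P. base p' j) \<in> {-1, 1}" using base by (intro prod_sign) auto
    then show ?thesis using base[OF that, of j] unfolding \<sigma>_def by auto
  qed
  moreover have "(\<Prod>j\<in>S p. \<sigma> p j) = c p" if pair: "card (S p) = 2" for p
  proof -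
    obtain x x' where x: "S p = {x, x'}" "x \<noteq> x'" using pair unfolding card_2_iff by blast
    define w where "w = (if other p = x then x' else x)"
    have S: "S p = {other p, w}" "w \<noteq> other p"
      using other[OF pair] x unfolding w_def by auto
    have "\<sigma> p j = base p j" if "j \<in> S p" for j
      using fix_at[of j] that pair unfolding \<sigma>_def by auto
    then have "(\<Prod>j\<in>S p. \<sigma> p j) = (\<Prod>j\<in>S p. base p j)" by (rule prod.cong[OF refl])
    also have "\<dots> = base p (other p) * base p w" using S by simp
    also have "\<dots> = c p" using S(2) pair unfolding base_def by simp
    finally show ?thesis .
  qed
  moreover have "(\<Prod>p\<in>P. \<sigma> p j) = 1" for j
  proof (cases "j \<in> J")
    case True
    have "base p j = 1" if "p \<in> P" for p
      using other True unfolding base_def by auto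
    then show ?thesis using True unfolding \<sigma>_def by simp
  next
    case False
    have "(\<Prod>p\<in>P. \<sigma> p j) = (\<Prod>p\<in>P. base p j) * (\<Prod>p\<in>P. base p j)"
      using fix_at[OF False] False \<open>finite P\<close> unfolding \<sigma>_def
      by (simp add: prod.distrib prod.delta)
    then show ?thesis using prod_sign[of P "\<lambda>p. base p j"] base by auto
  qed
  ultimately show ?thesis by blast
qed

lemma ex_subset_no_singleton_trace:
  fixes P :: "'p set" and D :: "'j set" and Z :: "'p \<Rightarrow> 'j \<Rightarrow> bool"
  assumes "finite P" "finite D" "card P < card D"
  shows "\<exists>I\<subseteq>D. I \<noteq> {} \<and> (\<forall>p\<in>P. card {j\<in>I. Z p j} \<noteq> 1)"
  using assms
proof (induction "card P" arbitrary: P D rule: less_induct)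
  case less
  show ?case
  proof (cases "\<exists>p\<in>P. card {j\<in>D. Z p j} = 1")
    case False
    then show ?thesis using less.prems by fastforce
  next
    case True
    then obtain p0 j0 where p0: "p0 \<in> P" "{j\<in>D. Z p0 j} = {j0}"
      by (meson card_1_singletonE)
    text \<open>Removing the row \<open>p0\<close> and its only nonzero column \<open>j0\<close> keeps more columns than rows.\<close>
    have "j0 \<in> D" using p0 by auto
    have "card (P - {p0}) < card P" using less.prems(1) p0(1) by (rule card_Diff1_less)
    moreover have "card (P - {p0}) < card (D - {j0})"
      using less.prems p0(1) \<open>j0 \<in> D\<close> card_gt_0_iff[of P] by (auto simp: card_Diff_singleton)
    ultimately obtain I where I: "I \<subseteq> D - {j0}" "I \<noteq> {}"
      "\<forall>p\<in>P - {p0}. card {j\<in>I. Z p j} \<noteq> 1"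
      using less.hyps less.prems by (meson finite_Diff)
    have "{j\<in>I. Z p0 j} = {}" using I(1) p0(2) by auto
    then have "card {j\<in>I. Z p0 j} = 0" by (simp only: card.empty)
    have "card {j\<in>I. Z p j} \<noteq> 1" if "p \<in> P" for p
    proof (cases "p = p0")
      case True
      then show ?thesis using \<open>card {j\<in>I. Z p0 j} = 0\<close> by simp
    next
      case False
      then show ?thesis using I(3) that by blast
    qed
    moreover have "I \<subseteq> D" using I(1) by blast
    ultimately show ?thesis using I(2) by blast
  qed
qed

lemma ex_subset_no_singleton_trace_no_common_pair:
  fixes P :: "'p set" and D :: "'j set" and Z :: "'p \<Rightarrow> 'j \<Rightarrow> bool"
  assumes "finite P" "finite D" "2 \<le> card P" "card P < card D"
  shows "\<exists>I\<subseteq>D. I \<noteq> {} \<and> (\<forall>p\<in>P. card {j\<in>I. Z p j} \<noteq> 1)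
    \<and> (\<nexists>j j'. j \<noteq> j' \<and> (\<forall>p\<in>P. {j\<in>I. Z p j} = {j, j'}))"
proof -
  have "P \<noteq> {}" using assms(3) by auto
  consider (zero) j where "j \<in> D" "\<forall>p\<in>P. \<not> Z p j"
    | (two) u v where "u \<in> D" "v \<in> D" "u \<noteq> v" "\<forall>p\<in>P. Z p u \<and> Z p v"
        "\<forall>j\<in>D. \<exists>p\<in>P. Z p j"
    | (neither) "\<forall>u\<in>D. \<forall>v\<in>D. u \<noteq> v \<longrightarrow> (\<exists>p\<in>P. \<not> Z p u \<or> \<not> Z p v)"
    by blast
  then show ?thesis
  proof cases
    case zero
    then have empty: "{j'\<in>{j}. Z p j'} = {}" if "p \<in> P" for p using that by auto
    obtain p where "p \<in> P" using \<open>P \<noteq> {}\<close> by blast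
    then have "\<nexists>j1 j2. j1 \<noteq> j2 \<and> (\<forall>p\<in>P. {j'\<in>{j}. Z p j'} = {j1, j2})"
      using empty by fastforce
    moreover have "card {j'\<in>{j}. Z p j'} \<noteq> 1" if "p \<in> P" for p
      using empty[OF that] by (simp only: card.empty)
    ultimately show ?thesis using zero(1) by (intro exI[of _ "{j}"]) blast
  next
    case two
    have "card (D - {u, v}) \<noteq> 0"
      using assms two(1-3) by (simp add: card_Diff_subset)
    then have "D - {u, v} \<noteq> {}" by (metis card.empty)
    then obtain w where w: "w \<in> D" "w \<noteq> u" "w \<noteq> v" by blast
    define I where "I = {u, v, w}"
    have "card {j\<in>I. Z p j} \<noteq> 1" if "p \<in> P" for p
    proof -
      have "{u, v} \<subseteq> {j\<in>I. Z p j}" using two(4) that unfolding I_def by auto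
      then have "card {u, v} \<le> card {j\<in>I. Z p j}" by (rule card_mono[rotated]) (simp add: I_def)
      then show ?thesis using two(3) by auto
    qed
    moreover have "\<nexists>j j'. j \<noteq> j' \<and> (\<forall>p\<in>P. {j\<in>I. Z p j} = {j, j'})"
    proof
      assume "\<exists>j j'. j \<noteq> j' \<and> (\<forall>p\<in>P. {j\<in>I. Z p j} = {j, j'})"
      then obtain j j' where jj: "\<forall>p\<in>P. {j\<in>I. Z p j} = {j, j'}" by blast
      obtain p where p: "p \<in> P" "Z p w" using two(5) w(1) by blast
      then have "{j\<in>I. Z p j} = I" using two(4) unfolding I_def by auto
      then have "card {j, j'} = 3" using jj p(1) w two(3) unfolding I_def by auto
      moreover have "card {j, j'} \<le> 2" by (cases "j = j'") auto
      ultimately show False by simp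
    qed
    moreover have "I \<subseteq> D" using two(1,2) w(1) unfolding I_def by auto
    ultimately show ?thesis unfolding I_def by blast
  next
    case neither
    obtain I where I: "I \<subseteq> D" "I \<noteq> {}" "\<forall>p\<in>P. card {j\<in>I. Z p j} \<noteq> 1"
      using ex_subset_no_singleton_trace[OF assms(1,2,4)] by blast
    have "\<nexists>j j'. j \<noteq> j' \<and> (\<forall>p\<in>P. {j\<in>I. Z p j} = {j, j'})"
    proof
      assume "\<exists>j j'. j \<noteq> j' \<and> (\<forall>p\<in>P. {j\<in>I. Z p j} = {j, j'})"
      then obtain j j' where jj: "j \<noteq> j'" "\<forall>p\<in>P. {j\<in>I. Z p j} = {j, j'}" by blast
      then have "j \<in> I" "j' \<in> I" "\<forall>p\<in>P. Z p j \<and> Z p j'" using \<open>P \<noteq> {}\<close> by blast+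
      then show False using neither I(1) jj(1) by blast
    qed
    then show ?thesis using I by blast
  qed
qed

lemma multiplicity_squarefree:
  fixes n :: nat
  assumes "squarefree n" "p \<in> prime_factors n"
  shows "multiplicity p n = 1"
proof -
  have "n \<noteq> 0" using assms(1) by (cases n) auto
  then show ?thesis using assms squarefree_factorial_semiring' by blast
qed

lemma Omega_squarefree: "squarefree n \<Longrightarrow> Omega n = card (prime_factors n)"
  unfolding Omega_def by (simp add: multiplicity_squarefree)

lemma Jacobi_squarefree:
  "squarefree n \<Longrightarrow> Jacobi a n = (\<Prod>p\<in>prime_factors n. Legendre (int a) (int p))"
  unfolding Jacobi_def by (simp add: multiplicity_squarefree)

lemma prod_prime_factors_squarefree:
  fixes n :: nat
  assumes "squarefree n"
  shows "\<Prod>(prime_factors n) = n"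
proof -
  have "n > 0" using assms by (cases n) auto
  then have "n = (\<Prod>p\<in>prime_factors n. p ^ multiplicity p n)" by (rule prime_factorization_nat)
  also have "\<dots> = \<Prod>(prime_factors n)" using assms by (simp add: multiplicity_squarefree)
  finally show ?thesis by simp
qed

lemma squarefree_dvdI:
  fixes n m :: nat
  assumes "squarefree n" "\<forall>p\<in>prime_factors n. p dvd m"
  shows "n dvd m"
proof -
  have "[m = 0] (mod \<Prod>(prime_factors n))"
    using assms(2)
    by (intro coprime_cong_prod_nat) (auto simp: cong_0_iff intro: primes_coprime)
  then show ?thesis using prod_prime_factors_squarefree[OF assms(1)] by (simp add: cong_0_iff)
qed

lemma Omega_eq_1_imp_prime:
  fixes n :: nat
  assumes "n > 0" "Omega n = 1"
  shows "prime n"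
proof -
  have pos: "multiplicity p n \<ge> 1" if "p \<in> prime_factors n" for p
    using that assms(1) by (auto simp: prime_factors_multiplicity)
  have "prime_factors n \<noteq> {}" using assms(2) unfolding Omega_def by auto
  then obtain p where p: "p \<in> prime_factors n" by blast
  have "multiplicity p n + (\<Sum>q\<in>prime_factors n - {p}. multiplicity q n) = 1"
    using assms(2) p unfolding Omega_def by (simp add: sum.remove)
  then have "multiplicity p n = 1" and rest: "(\<Sum>q\<in>prime_factors n - {p}. multiplicity q n) = 0"
    using pos[OF p] by linarith+
  have "q = p" if "q \<in> prime_factors n" for q
  proof (rule ccontr)
    assume "q \<noteq> p"
    then have "multiplicity q n = 0" using rest that by simp
    then show False using pos[OF that] by simp
  qed
  then have "prime_factors n = {p}" using p by blast
  have "n = (\<Prod>q\<in>prime_factors n. q ^ multiplicity q n)" using assms(1) by (rule prime_factorization_nat)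
  also have "\<dots> = p" using \<open>prime_factors n = {p}\<close> \<open>multiplicity p n = 1\<close> by simp
  finally have "n = p" .
  then show ?thesis using in_prime_factors_imp_prime[OF p] by simp
qed

lemma S_set_prime:
  fixes p a :: nat
  assumes "prime p" "a \<in> S_set p"
  shows "Legendre (int a) p = 1"
proof -
  have "Jacobi a p = Legendre (int a) p"
    using Jacobi_squarefree[OF squarefree_prime[OF assms(1)]] prime_prime_factors[OF assms(1)] by simp
  then show ?thesis using assms(2) unfolding S_set_def by simp
qed

lemma ex_cong_prime_factors:
  fixes n :: nat and f :: "nat \<Rightarrow> int"
  assumes "n > 0"
  shows "\<exists>a<n. \<forall>p\<in>prime_factors n. [int a = f p] (mod p)"
proof -
  obtain x where x: "\<forall>p\<in>prime_factors n. [x = nat (f p mod p)] (mod p)"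
    using chinese_remainder_nat[of "prime_factors n" id "\<lambda>p. nat (f p mod p)"]
    by (auto intro: primes_coprime)
  have "[int (x mod n) = f p] (mod p)" if "p \<in> prime_factors n" for p
  proof -
    have "[x mod n = x] (mod p)" using that by (simp add: cong_def mod_mod_cancel in_prime_factors_iff)
    with x that have "[int (x mod n) = int (nat (f p mod p))] (mod p)"
      by (metis cong_int_iff cong_trans)
    moreover have "int (nat (f p mod p)) = f p mod p"
      using that by (simp add: prime_gt_0_nat in_prime_factors_iff)
    ultimately show ?thesis by (simp add: cong_def)
  qed
  then show ?thesis using assms by (intro exI[of _ "x mod n"]) auto
qed

lemma has_weighted_zero_subseqI:
  assumes "I \<subseteq> {..<length xs}" "I \<noteq> {}" "\<forall>i\<in>I. a i \<in> A" "n dvd (\<Sum>i\<in>I. a i * xs ! i)"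
  shows "has_weighted_zero_subseq A n xs"
  unfolding has_weighted_zero_subseq_def weighted_zero_sum_def
  using assms by (intro exI[of _ I] conjI exI[of _ a]) simp_all

lemma has_weighted_zero_subseqE:
  assumes "has_weighted_zero_subseq A n xs"
  obtains I a where "I \<subseteq> {..<length xs}" "I \<noteq> {}" "\<forall>i\<in>I. a i \<in> A"
    "n dvd (\<Sum>i\<in>I. a i * xs ! i)"
proof -
  obtain I where I: "I \<subseteq> {..<length xs}" "I \<noteq> {}" "weighted_zero_sum A n xs I"
    using assms unfolding has_weighted_zero_subseq_def by (elim exE conjE) (intro that)
  obtain a where a: "\<forall>i\<in>I. a i \<in> A" "(\<Sum>i\<in>I. a i * xs ! i) mod n = 0"
    using I(3) unfolding weighted_zero_sum_def by (elim exE conjE) (intro that)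
  from a(2) have "n dvd (\<Sum>i\<in>I. a i * xs ! i)" by (rule mod_0_imp_dvd)
  with I(1,2) a(1) show ?thesis by (rule that)
qed

text \<open>Local weights \<open>B p j\<close> at the primes \<open>p\<close> of \<open>n\<close> are glued by the Chinese remainder theorem;
  the Jacobi symbol of the glued weight is the product of the local Legendre symbols.\<close>
lemma has_weighted_zero_subseq_S_setI:
  fixes n :: nat and B :: "nat \<Rightarrow> nat \<Rightarrow> int"
  assumes "squarefree n" "I \<subseteq> {..<length xs}" "I \<noteq> {}"
    and sum: "\<forall>p\<in>prime_factors n. int p dvd (\<Sum>j\<in>I. B p j * int (xs ! j))"
    and Legendre: "\<forall>j\<in>I. (\<Prod>p\<in>prime_factors n. Legendre (B p j) p) = 1"
  shows "has_weighted_zero_subseq (S_set n) n xs"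
proof -
  have "n > 0" using assms(1) by (cases n) auto
  have "\<forall>j. \<exists>a. a < n \<and> (\<forall>p\<in>prime_factors n. [int a = B p j] (mod p))"
  proof
    fix j show "\<exists>a. a < n \<and> (\<forall>p\<in>prime_factors n. [int a = B p j] (mod p))"
      using ex_cong_prime_factors[OF \<open>n > 0\<close>, of "\<lambda>p. B p j"] by blast
  qed
  then have "\<exists>a. \<forall>j. a j < n \<and> (\<forall>p\<in>prime_factors n. [int (a j) = B p j] (mod p))"
    by (rule choice)
  then obtain a where a: "a j < n" "\<forall>p\<in>prime_factors n. [int (a j) = B p j] (mod p)" for j
    by blast
  have L: "Legendre (int (a j)) p = Legendre (B p j) p" if "p \<in> prime_factors n" for p j
    using a(2) that by (blast intro: Legendre_cong)
  have "\<forall>j\<in>I. a j \<in> S_set n"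
  proof
    fix j assume "j \<in> I"
    have "Jacobi (a j) n = (\<Prod>p\<in>prime_factors n. Legendre (B p j) p)"
      unfolding Jacobi_squarefree[OF assms(1)] by (rule prod.cong) (simp_all add: L)
    then have "Jacobi (a j) n = 1" using Legendre \<open>j \<in> I\<close> by simp
    moreover have "coprime (a j) (\<Prod>p\<in>prime_factors n. p)"
    proof (rule prod_coprime_right)
      fix p assume p: "p \<in> prime_factors n"
      have "Legendre (B p j) p \<noteq> 0"
      proof
        assume "Legendre (B p j) p = 0"
        then have "(\<Prod>q\<in>prime_factors n. Legendre (B q j) q) = 0" using p by (intro prod_zero) auto
        then show False using Legendre \<open>j \<in> I\<close> by simp
      qed
      then have "Legendre (int (a j)) p \<noteq> 0" using L[OF p] by simp
      then have "\<not> p dvd a j" by (simp add: Legendre_eq_0_iff)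
      with in_prime_factors_imp_prime[OF p] have "coprime p (a j)" by (rule prime_imp_coprime)
      then show "coprime (a j) p" by (simp only: coprime_commute)
    qed
    ultimately show "a j \<in> S_set n" using a(1) prod_prime_factors_squarefree[OF assms(1)]
      unfolding S_set_def by simp
  qed
  moreover have "n dvd (\<Sum>j\<in>I. a j * xs ! j)"
  proof (rule squarefree_dvdI[OF assms(1)], intro ballI)
    fix p assume p: "p \<in> prime_factors n"
    have "[(\<Sum>j\<in>I. int (a j) * int (xs ! j)) = (\<Sum>j\<in>I. B p j * int (xs ! j))] (mod p)"
      using a(2) p by (intro cong_sum cong_scalar_right) blast
    then have "int p dvd (\<Sum>j\<in>I. int (a j) * int (xs ! j))"
      using sum p cong_dvd_iff by blast
    then have "int p dvd int (\<Sum>j\<in>I. a j * xs ! j)" by simp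
    then show "p dvd (\<Sum>j\<in>I. a j * xs ! j)" by (simp only: of_nat_dvd_iff)
  qed
  ultimately show ?thesis by (rule has_weighted_zero_subseqI[OF assms(2,3)])
qed

lemma has_weighted_zero_subseq_take:
  assumes "has_weighted_zero_subseq A n (take k xs)"
  shows "has_weighted_zero_subseq A n xs"
proof -
  obtain I a where I: "I \<subseteq> {..<length (take k xs)}" "I \<noteq> {}" "\<forall>i\<in>I. a i \<in> A"
    "n dvd (\<Sum>i\<in>I. a i * take k xs ! i)"
    using assms by (rule has_weighted_zero_subseqE)
  have "(\<Sum>i\<in>I. a i * take k xs ! i) = (\<Sum>i\<in>I. a i * xs ! i)"
    using I(1) by (intro sum.cong) auto
  with I show ?thesis by (intro has_weighted_zero_subseqI[of I _ a]) auto
qed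

lemma weighted_davenport_eqI:
  assumes "0 < m"
    and long: "\<And>xs. length xs = m \<Longrightarrow> set xs \<subseteq> {..<n} \<Longrightarrow> has_weighted_zero_subseq A n xs"
    and short: "length ys + 1 = m" "set ys \<subseteq> {..<n}" "\<not> has_weighted_zero_subseq A n ys"
  shows "weighted_davenport A n = m"
  unfolding weighted_davenport_def
proof (rule Least_equality)
  show "0 < m \<and> (\<forall>xs. length xs = m \<and> set xs \<subseteq> {..<n} \<longrightarrow> has_weighted_zero_subseq A n xs)"
    using assms(1) long by blast
next
  fix k
  assume k: "0 < k \<and> (\<forall>xs. length xs = k \<and> set xs \<subseteq> {..<n} \<longrightarrow> has_weighted_zero_subseq A n xs)"
  show "m \<le> k"
  proof (rule ccontr)
    assume "\<not> m \<le> k"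
    then have "length (take k ys) = k" using short(1) by simp
    moreover have "set (take k ys) \<subseteq> {..<n}" using set_take_subset short(2) by (rule subset_trans)
    ultimately have "has_weighted_zero_subseq A n (take k ys)" using k by blast
    then show False using short(3) has_weighted_zero_subseq_take by blast
  qed
qed

subsection \<open>Lower bounds\<close>

lemma prime_dvd_div_prime:
  fixes q r n :: nat
  assumes "prime q" "prime r" "q \<noteq> r" "q dvd n" "r dvd n"
  shows "q dvd n div r"
proof -
  have "q dvd r * (n div r)" using assms(4,5) by simp
  moreover have "\<not> q dvd r" using primes_dvd_imp_eq[OF assms(1,2)] assms(3) by blast
  ultimately show ?thesis using assms(1) prime_dvd_mult_iff by blast
qed

text \<open>In a weighted sum of the cofactors \<open>n / q\<close>, every term but the one at \<open>q\<close> is divisible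
  by \<open>q\<close>.\<close>
lemma ex_zero_sum_free_cofactors:
  fixes n :: nat
  assumes sq: "squarefree n" and A: "\<forall>a\<in>A. coprime a n"
  shows "\<exists>xs. length xs = card (prime_factors n) \<and> set xs \<subseteq> {..<n}
    \<and> \<not> has_weighted_zero_subseq A n xs"
proof -
  obtain ps where ps: "distinct ps" "set ps = prime_factors n"
    using finite_distinct_list[of "prime_factors n"] by blast
  define xs where "xs = map (\<lambda>q. n div q) ps"
  have "n \<noteq> 0" using sq by (cases n) auto
  have prime: "prime (ps ! i)" "ps ! i dvd n" if "i < length ps" for i
    using nth_mem[OF that] ps(2) by (auto intro: in_prime_factors_imp_prime)
  have "length xs = card (prime_factors n)" unfolding xs_def using distinct_card[OF ps(1)] ps(2) by simp
  moreover have "set xs \<subseteq> {..<n}"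
  proof
    fix x assume "x \<in> set xs"
    then obtain i where i: "i < length ps" "x = n div ps ! i"
      unfolding xs_def by (auto simp: in_set_conv_nth)
    have "n div ps ! i < n" using prime_gt_1_nat[OF prime(1)[OF i(1)]] \<open>n \<noteq> 0\<close> by simp
    then show "x \<in> {..<n}" using i(2) by simp
  qed
  moreover have "\<not> has_weighted_zero_subseq A n xs"
  proof
    assume "has_weighted_zero_subseq A n xs"
    then obtain I a where I: "I \<subseteq> {..<length xs}" "I \<noteq> {}" "\<forall>i\<in>I. a i \<in> A"
      "n dvd (\<Sum>i\<in>I. a i * xs ! i)"
      by (rule has_weighted_zero_subseqE)
    obtain j where "j \<in> I" using I(2) by blast
    define q where "q = ps ! j"
    have j: "j < length ps" using \<open>j \<in> I\<close> I(1) unfolding xs_def by auto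
    have "q dvd (\<Sum>i\<in>I. a i * xs ! i)" using prime(2)[OF j] I(4) unfolding q_def by (rule dvd_trans)
    moreover have "(\<Sum>i\<in>I. a i * xs ! i) = a j * (n div q) + (\<Sum>i\<in>I - {j}. a i * xs ! i)"
      using \<open>j \<in> I\<close> I(1) j unfolding xs_def q_def by (simp add: sum.remove finite_subset)
    moreover have "q dvd (\<Sum>i\<in>I - {j}. a i * xs ! i)"
    proof (rule dvd_sum)
      fix i assume i: "i \<in> I - {j}"
      then have "i < length ps" using I(1) unfolding xs_def by auto
      then have "q dvd n div ps ! i" using prime[OF j] prime[of i] j i ps(1) unfolding q_def
        by (intro prime_dvd_div_prime) (auto simp: nth_eq_iff_index_eq)
      then show "q dvd a i * xs ! i" using \<open>i < length ps\<close> unfolding xs_def by simp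
    qed
    ultimately have "q dvd a j * (n div q)" by (simp add: dvd_add_left_iff)
    moreover have "\<not> q dvd a j"
    proof
      assume "q dvd a j"
      have "coprime (a j) n" using A I(3) \<open>j \<in> I\<close> by blast
      then have "is_unit q" using \<open>q dvd a j\<close> prime(2)[OF j] unfolding q_def
        by (rule coprime_common_divisor)
      then show False using prime(1)[OF j] unfolding q_def by simp
    qed
    moreover have "\<not> q dvd n div q"
    proof
      assume "q dvd n div q"
      then have "q * q dvd q * (n div q)" by (rule mult_dvd_mono[OF dvd_refl])
      then have "q ^ 2 dvd n" using prime(2)[OF j] unfolding q_def power2_eq_square by simp
      then have "q dvd 1" by (rule squarefreeD[OF sq])
      then show False using prime(1)[OF j] unfolding q_def by simp
    qed
    ultimately show False using prime(1)[OF j] prime_dvd_mult_iff unfolding q_def by blast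
  qed
  ultimately show ?thesis by blast
qed

lemma ex_zero_sum_free_prime:
  fixes p :: nat
  assumes "prime p" "2 < p"
  shows "\<exists>xs. length xs = 2 \<and> set xs \<subseteq> {..<p} \<and> \<not> has_weighted_zero_subseq (S_set p) p xs"
proof -
  obtain g :: nat where g: "0 < g" "g < p" "Legendre (int g) p = -1"
    using ex_nonresidue[OF assms] by blast
  define xs where "xs = [1, p - g]"
  have "\<not> has_weighted_zero_subseq (S_set p) p xs"
  proof
    assume "has_weighted_zero_subseq (S_set p) p xs"
    then obtain I a where I: "I \<subseteq> {0, 1}" "I \<noteq> {}" "\<forall>i\<in>I. a i \<in> S_set p"
      "p dvd (\<Sum>i\<in>I. a i * xs ! i)"
      by (rule has_weighted_zero_subseqE) (auto simp: xs_def lessThan_def less_Suc_eq)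
    have L: "Legendre (int (a i)) p = 1" if "i \<in> I" for i
      using I(3) that by (intro S_set_prime[OF assms(1)]) blast
    have unit: "\<not> int p dvd int (a i)" if "i \<in> I" for i
      using L[OF that] by (auto simp flip: Legendre_eq_0_iff)
    have "\<not> int p dvd int (p - g)" using g zdvd_not_zless[of "int (p - g)" "int p"] by simp
    have p_prime: "prime (int p)" using assms(1) by simp
    have "int p dvd int (\<Sum>i\<in>I. a i * xs ! i)" using I(4) by (simp only: of_nat_dvd_iff)
    then have dvd: "int p dvd (\<Sum>i\<in>I. int (a i) * int (xs ! i))" by simp
    consider "I = {0}" | "I = {1}" | "I = {0, 1}" using I(1,2) by blast
    then show False
    proof cases
      case 1 then show False using dvd unit by (simp add: xs_def)
    next
      case 2
      then show False using dvd unit[of 1] \<open>\<not> int p dvd int (p - g)\<close> p_prime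
        by (simp add: xs_def prime_dvd_mult_iff)
    next
      case 3
      then have "int p dvd int (a 0) + int (a 1) * (int p - int g)"
        using dvd g(2) by (simp add: xs_def of_nat_diff)
      then have "int p dvd int (a 0) - int (a 1) * int g + int p * int (a 1)"
        by (simp add: algebra_simps)
      then have "[int (a 0) = int (a 1) * int g] (mod p)"
        by (simp add: cong_iff_dvd_diff dvd_add_left_iff)
      then have "Legendre (int (a 0)) p = Legendre (int (a 1) * int g) p" by (rule Legendre_cong)
      also have "\<dots> = Legendre (int (a 1)) p * Legendre (int g) p" by (rule Legendre_mult[OF assms])
      finally have "Legendre (int (a 0)) p = Legendre (int (a 1)) p * Legendre (int g) p" .
      then show False using L[of 0] L[of 1] g(3) 3 by simp
    qed
  qed
  moreover have "set xs \<subseteq> {..<p}" using assms g unfolding xs_def by auto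
  moreover have "length xs = 2" unfolding xs_def by simp
  ultimately show ?thesis by blast
qed

subsection \<open>Upper bounds\<close>

lemma ex_residue_weighted_zero_subsum_3:
  fixes p :: nat and y :: "nat \<Rightarrow> int"
  assumes p: "prime p" "2 < p"
  shows "\<exists>I b. I \<subseteq> {0, 1, 2} \<and> I \<noteq> {} \<and> (\<forall>j\<in>I. Legendre (b j) p = 1)
    \<and> int p dvd (\<Sum>j\<in>I. b j * y j)"
proof -
  have L1: "Legendre 1 p = 1" using Legendre_one[of "int p"] p by simp
  consider (zero) j where "j \<in> {0, 1, 2}" "int p dvd y j"
    | (pair) i j where "i \<in> {0, 1, 2}" "j \<in> {0, 1, 2}" "i \<noteq> j" "\<not> int p dvd y j"
        "Legendre (- (y i * y j)) p = 1"
    | (none) "\<forall>j\<in>{0, 1, 2}. \<not> int p dvd y j"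
        "\<forall>i\<in>{0, 1, 2}. \<forall>j\<in>{0, 1, 2}. i \<noteq> j \<longrightarrow> Legendre (- (y i * y j)) p \<noteq> 1"
    by blast
  then show ?thesis
  proof cases
    case zero
    then show ?thesis using L1 by (intro exI[of _ "{j}"] exI[of _ "\<lambda>_. 1"]) auto
  next
    case pair
    obtain bj where bj: "[bj * y j = - y i] (mod p)"
      "Legendre bj p = Legendre (- y i) p * Legendre (y j) p"
      using ex_quotient_with_Legendre[OF p pair(4)] by blast
    have "Legendre bj p = 1"
      using bj(2) pair(5) by (simp add: Legendre_minus[OF p, of "y i * y j"]
        Legendre_minus[OF p, of "y i"] Legendre_mult[OF p])
    moreover have "int p dvd y i + bj * y j" using bj(1) by (simp add: cong_iff_dvd_diff add.commute)
    ultimately show ?thesis using pair(1-3) L1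
      by (intro exI[of _ "{i, j}"] exI[of _ "(\<lambda>_. 1)(j := bj)"]) auto
  next
    case none
    then have unit: "\<not> int p dvd y 0" "\<not> int p dvd y 1" "\<not> int p dvd y 2" by auto
    have neg: "Legendre (- (y i * y j)) p = -1" if "i \<in> {0, 1, 2}" "j \<in> {0, 1, 2}" "i \<noteq> j" for i j
    proof -
      have "\<not> int p dvd - (y i * y j)"
        using none(1) that p(1) by (auto simp: prime_dvd_mult_iff)
      then show ?thesis using Legendre_eq_1_or_minus_1 none(2) that by blast
    qed
    text \<open>All three products \<open>-y_i y_j\<close> being nonresidues forces \<open>(-1/p) = -1\<close> and equal symbols
      \<open>(y_i/p)\<close>; then \<open>y_0 + r y_0 - (r + 1) y_0 = 0\<close> with \<open>r\<close>, \<open>-(r + 1)\<close> residues.\<close>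
    have m: "Legendre (-1) p * Legendre (y i) p * Legendre (y j) p = -1"
      if "i \<in> {0, 1, 2}" "j \<in> {0, 1, 2}" "i \<noteq> j" for i j
      using neg[OF that] Legendre_minus[OF p, of "y i * y j"] Legendre_mult[OF p, of "y i" "y j"]
      by (simp add: mult.assoc)
    have u: "Legendre (y 0) p * Legendre (y 0) p = 1" "Legendre (y 1) p * Legendre (y 1) p = 1"
      "Legendre (y 2) p * Legendre (y 2) p = 1"
      using unit by (simp_all add: Legendre_mult_self)
    have "Legendre (-1) p = 1 \<or> Legendre (-1) p = -1"
      using Legendre_eq_1_or_minus_1[of "int p" "-1"] p by simp
    then have minus: "Legendre (-1) p = -1" and same: "Legendre (y 1) p = Legendre (y 0) p"
      "Legendre (y 2) p = Legendre (y 0) p"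
      using m[of 0 1] m[of 0 2] m[of 1 2] Legendre_eq_1_or_minus_1[OF unit(1)] Legendre_eq_1_or_minus_1[OF unit(2)]
        Legendre_eq_1_or_minus_1[OF unit(3)] by auto
    obtain r where r: "Legendre r p = 1" "Legendre (r + 1) p = -1"
      using ex_consecutive_residue_nonresidue[OF p] by blast
    obtain b1 where b1: "[b1 * y 1 = r * y 0] (mod p)"
      "Legendre b1 p = Legendre (r * y 0) p * Legendre (y 1) p"
      using ex_quotient_with_Legendre[OF p unit(2)] by blast
    obtain b2 where b2: "[b2 * y 2 = - ((r + 1) * y 0)] (mod p)"
      "Legendre b2 p = Legendre (- ((r + 1) * y 0)) p * Legendre (y 2) p"
      using ex_quotient_with_Legendre[OF p unit(3)] by blast
    define b :: "nat \<Rightarrow> int" where "b = (\<lambda>_. 1)(1 := b1, 2 := b2)"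
    have "Legendre b1 p = 1" using b1(2) r(1) same u by (simp add: Legendre_mult[OF p])
    moreover have "Legendre b2 p = 1"
      using b2(2) r(2) same u minus
      by (simp add: Legendre_minus[OF p, of "(r + 1) * y 0"] Legendre_mult[OF p])
    ultimately have "\<forall>j\<in>{0, 1, 2}. Legendre (b j) p = 1" using L1 unfolding b_def by auto
    moreover have "[y 0 + (b1 * y 1 + b2 * y 2) = y 0 + (r * y 0 + - ((r + 1) * y 0))] (mod p)"
      using cong_add[OF b1(1) b2(1)] by (rule cong_add[OF cong_refl])
    then have "int p dvd y 0 + (b1 * y 1 + b2 * y 2)" by (simp add: cong_0_iff algebra_simps)
    then have "int p dvd (\<Sum>j\<in>{0, 1, 2}. b j * y j)" unfolding b_def by simp
    ultimately show ?thesis by blast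
  qed
qed

lemma has_weighted_zero_subseq_prime:
  fixes p :: nat
  assumes "prime p" "2 < p" "3 \<le> length xs"
  shows "has_weighted_zero_subseq (S_set p) p xs"
proof -
  obtain I b where I: "I \<subseteq> {0, 1, 2}" "I \<noteq> {}" "\<forall>j\<in>I. Legendre (b j) p = 1"
    "int p dvd (\<Sum>j\<in>I. b j * int (xs ! j))"
    using ex_residue_weighted_zero_subsum_3[OF assms(1,2), of "\<lambda>j. int (xs ! j)"] by blast
  show ?thesis
  proof (rule has_weighted_zero_subseq_S_setI[of p I xs "\<lambda>_. b"])
    show "I \<subseteq> {..<length xs}" using I(1) assms(3) by auto
  qed (use assms(1) I in \<open>simp_all add: squarefree_prime prime_prime_factors\<close>)
qed

lemma has_weighted_zero_subseq_squarefree: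
  fixes n :: nat
  assumes sq: "squarefree n" and large: "\<forall>p\<in>prime_factors n. 7 \<le> p"
    and "2 \<le> card (prime_factors n)" "card (prime_factors n) < length xs"
  shows "has_weighted_zero_subseq (S_set n) n xs"
proof -
  define y where "y j = int (xs ! j)" for j
  obtain I where I: "I \<subseteq> {..<length xs}" "I \<noteq> {}"
    "\<forall>p\<in>prime_factors n. card {j\<in>I. \<not> int p dvd y j} \<noteq> 1"
    "\<nexists>j j'. j \<noteq> j' \<and> (\<forall>p\<in>prime_factors n. {j\<in>I. \<not> int p dvd y j} = {j, j'})"
    using ex_subset_no_singleton_trace_no_common_pair[of "prime_factors n" "{..<length xs}" "\<lambda>p j. \<not> int p dvd y j"] assms(3,4)
    by auto
  have "finite I" using I(1) finite_subset by blast
  define c where "c p = Legendre (- (\<Prod>j\<in>{j\<in>I. \<not> int p dvd y j}. y j)) p" for p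
  have "c p \<in> {-1, 1}" if "p \<in> prime_factors n" for p
  proof -
    have "prime (int p)" using that by (simp add: in_prime_factors_imp_prime)
    moreover have "finite {j\<in>I. \<not> int p dvd y j}" using \<open>finite I\<close> by simp
    ultimately have "int p dvd (\<Prod>j\<in>{j\<in>I. \<not> int p dvd y j}. y j)
        \<longleftrightarrow> (\<exists>j\<in>{j\<in>I. \<not> int p dvd y j}. int p dvd y j)"
      by (intro prime_dvd_prod_iff)
    then have "\<not> int p dvd (\<Prod>j\<in>{j\<in>I. \<not> int p dvd y j}. y j)" by blast
    then have "\<not> int p dvd - (\<Prod>j\<in>{j\<in>I. \<not> int p dvd y j}. y j)" by simp
    from Legendre_eq_1_or_minus_1[OF this] show ?thesis unfolding c_def by auto
  qed
  then obtain \<sigma> where \<sigma>: "\<forall>p\<in>prime_factors n. \<forall>j. \<sigma> p j \<in> {-1, 1}"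
    "\<forall>p\<in>prime_factors n. card {j\<in>I. \<not> int p dvd y j} = 2
       \<longrightarrow> (\<Prod>j\<in>{j\<in>I. \<not> int p dvd y j}. \<sigma> p j) = c p"
    "\<forall>j. (\<Prod>p\<in>prime_factors n. \<sigma> p j) = 1"
    using ex_sign_pattern[of "prime_factors n" c "\<lambda>p. {j\<in>I. \<not> int p dvd y j}"] I(4) by auto
  have "\<forall>p\<in>prime_factors n. \<exists>b. (\<forall>j\<in>I. Legendre (b j) p = \<sigma> p j) \<and> int p dvd (\<Sum>j\<in>I. b j * y j)"
  proof
    fix p assume p: "p \<in> prime_factors n"
    show "\<exists>b. (\<forall>j\<in>I. Legendre (b j) p = \<sigma> p j) \<and> int p dvd (\<Sum>j\<in>I. b j * y j)"
    proof (rule ex_Legendre_weights_zero_sum)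
      show "prime p" "7 \<le> p" using p large by (auto intro: in_prime_factors_imp_prime)
    qed (use p \<open>finite I\<close> I(3) \<sigma>(1,2) in \<open>auto simp: c_def\<close>)
  qed
  then obtain B where B: "\<forall>p\<in>prime_factors n. (\<forall>j\<in>I. Legendre (B p j) p = \<sigma> p j)
      \<and> int p dvd (\<Sum>j\<in>I. B p j * y j)"
    by (metis bchoice)
  show ?thesis
  proof (rule has_weighted_zero_subseq_S_setI[OF sq I(1,2)])
    show "\<forall>p\<in>prime_factors n. int p dvd (\<Sum>j\<in>I. B p j * int (xs ! j))" using B unfolding y_def by blast
    show "\<forall>j\<in>I. (\<Prod>p\<in>prime_factors n. Legendre (B p j) p) = 1"
      using B \<sigma>(3) by (simp cong: prod.cong)
  qed
qed

theorem theorem2p11: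
  fixes n :: nat
  assumes "odd n" and "n > 0"
  shows "(Omega n = 1 \<longrightarrow> weighted_davenport (S_set n) n = 3)
       \<and> (squarefree n \<and> (\<forall>p\<in>prime_factors n. p \<ge> 7) \<and> Omega n \<ge> 2
            \<longrightarrow> weighted_davenport (S_set n) n = Omega n + 1)"
proof (intro conjI impI)
  assume "Omega n = 1"
  with assms(2) have "prime n" by (rule Omega_eq_1_imp_prime)
  moreover have "n \<noteq> 2" using assms(1) by auto
  ultimately have "2 < n" using prime_ge_2_nat[of n] by linarith
  obtain ys where ys: "length ys = 2" "set ys \<subseteq> {..<n}" "\<not> has_weighted_zero_subseq (S_set n) n ys"
    using ex_zero_sum_free_prime[OF \<open>prime n\<close> \<open>2 < n\<close>] by blast
  show "weighted_davenport (S_set n) n = 3"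
    by (rule weighted_davenport_eqI[OF _ _ _ ys(2,3)])
      (use ys(1) has_weighted_zero_subseq_prime[OF \<open>prime n\<close> \<open>2 < n\<close>] in auto)
next
  assume "squarefree n \<and> (\<forall>p\<in>prime_factors n. p \<ge> 7) \<and> Omega n \<ge> 2"
  then have sq: "squarefree n" and large: "\<forall>p\<in>prime_factors n. 7 \<le> p"
    and k: "2 \<le> card (prime_factors n)" and Omega: "Omega n = card (prime_factors n)"
    using Omega_squarefree by auto
  have "\<forall>a\<in>S_set n. coprime a n" unfolding S_set_def by blast
  then obtain ys where ys: "length ys = card (prime_factors n)" "set ys \<subseteq> {..<n}"
    "\<not> has_weighted_zero_subseq (S_set n) n ys"
    using ex_zero_sum_free_cofactors[OF sq] by blast
  show "weighted_davenport (S_set n) n = Omega n + 1"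
    by (rule weighted_davenport_eqI[OF _ _ _ ys(2,3)])
      (use ys(1) Omega has_weighted_zero_subseq_squarefree[OF sq large k] in auto)
qed

end
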